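(* Let $X$ be a non-negative absolutely continuous random variable with CDF $F$ and PDF $f$, and let $T_1,T_2$ be the lifetimes of two coherent systems whose components are identically distributed as $X$, with distortion functions $q_1,q_2$, so that $T_i$ has CDF $F_{T_i}(x)=q_i(F(x))$ and PDF $f_{T_i}(x)=q_i'(F(x))f(x)$, $i=1,2$. Let $0<\alpha<\infty$, $\alpha\ne1$, $\beta>0$, put $\psi_{\alpha,i}(u)=f_{T_i}^\alpha(F_{T_i}^{-1}(u))$ for $0\le u\le1$, and $$\gamma_{1,\alpha}=\Big(\inf_{u\in(0,1)}\frac{\psi_{\alpha,2}(q_2(u))}{\psi_{\alpha,1}(q_1(u))}\Big)^{\beta-1},\qquad \gamma_{2,\alpha}=\Big(\sup_{u\in(0,1)}\frac{\psi_{\alpha,2}(q_2(u))}{\psi_{\alpha,1}(q_1(u))}\Big)^{\beta-1}.$$ Then (A) $\gamma_{1,\alpha}R^\alpha_\beta(T_1)\le R^\alpha_\beta(T_2)\le \gamma_{2,\alpha}R^\alpha_\beta(T_1)$ for $\{\alpha>1,\beta\le1\}$ or $\{0<\alpha<1,\beta\ge1\}$; (B) $\gamma_{1,\alpha}R^\alpha_\beta(T_1)\ge R^\alpha_\beta(T_2)\ge \gamma_{2,\alpha}R^\alpha_\beta(T_1)$ for $\{\alpha>1,\beta\ge1\}$ or $\{0<\alpha<1,\beta\le1\}$.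
   Context: For a non-negative absolutely continuous random variable $Z$ with PDF $h$, the Rényi information generating function is $R^\alpha_\beta(Z)=\frac{1}{1-\alpha}\left(\int_0^\infty h^\alpha(x)\,dx\right)^{\beta-1}$; all integrals are assumed finite and the infimum and supremum are assumed finite and positive. A distortion function is a continuous increasing (differentiable) function $q:[0,1]\to[0,1]$ with $q(0)=0$, $q(1)=1$. Quantile functions are $F^{-1}(u)=\inf\{x:F(x)\ge u\}$. *)

theory Defs
  imports "HOL-Analysis.Analysis"
begin

definition quantile :: "(real \<Rightarrow> real) \<Rightarrow> real \<Rightarrow> real" where
  "quantile G u = Inf {x. G x \<ge> u}"

definition renyi_igf :: "real \<Rightarrow> real \<Rightarrow> (real \<Rightarrow> real) \<Rightarrow> real" where
  "renyi_igf \<alpha> \<beta> h = (1 / (1 - \<alpha>)) * (LINT x:{0..}|lborel. h x powr \<alpha>) powr (\<beta> - 1)"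

definition distortion_fn :: "(real \<Rightarrow> real) \<Rightarrow> (real \<Rightarrow> real) \<Rightarrow> bool" where
  "distortion_fn q dq \<longleftrightarrow>
     continuous_on {0..1} q \<and> strict_mono_on {0..1} q \<and> q ` {0..1} \<subseteq> {0..1} \<and>
     q 0 = 0 \<and> q 1 = 1 \<and>
     (\<forall>u\<in>{0..1}. (q has_real_derivative dq u) (at u within {0..1}))"

end

theory Submission
  imports Defs "HOL-Probability.Probability"
begin

text \<open>
  Almost everywhere on {x. f x > 0} the value u = F x lies in (0, 1). Since q_i is strictly
  increasing, the quantile of FT_i at q_i u is the quantile m of F at u, and F m = u by continuity
  of F. Hence psi_i (q_i u) = (dq_i u * f m) powr \<alpha>, so that ratio u = fT2 x powr \<alpha> / fT1 x powr \<alpha>: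
  the infimum and supremum of the ratio bound fT2 powr \<alpha> against fT1 powr \<alpha> almost everywhere.
  Integrating and then applying I \<mapsto> I powr (\<beta> - 1) / (1 - \<alpha>), which preserves or reverses
  order according to the signs of \<beta> - 1 and 1 - \<alpha>, gives both chains of inequalities.
\<close>

lemma emeasure_density_lborel_eq_set_integral:
  fixes f :: "real \<Rightarrow> real"
  assumes f_meas: "f \<in> borel_measurable lborel" and f_nonneg: "\<And>x. 0 \<le> f x"
    and f_int: "integrable lborel f" and A: "A \<in> sets borel"
  shows "emeasure (density lborel f) A = ennreal (LINT x:A|lborel. f x)"
proof -
  have "emeasure (density lborel f) A = (\<integral>\<^sup>+ x. ennreal (f x) * indicator A x \<partial>lborel)"
    using A f_meas by (subst emeasure_density) auto
  also have "\<dots> = (\<integral>\<^sup>+ x. ennreal (f x * indicator A x) \<partial>lborel)"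
    by (intro nn_integral_cong) (auto split: split_indicator)
  also have "\<dots> = ennreal (LINT x|lborel. f x * indicator A x)"
    using A f_nonneg by (intro nn_integral_eq_integral integrable_real_mult_indicator f_int) auto
  finally show ?thesis
    by (simp add: set_lebesgue_integral_def mult.commute)
qed

lemma
  fixes f :: "real \<Rightarrow> real"
  assumes f_meas: "f \<in> borel_measurable lborel" and f_nonneg: "\<And>x. 0 \<le> f x"
    and f_int: "integrable lborel f" and f_total: "(LINT x|lborel. f x) = 1"
  shows real_distribution_density_lborel: "real_distribution (density lborel f)"
    and cdf_density_lborel: "cdf (density lborel f) x = (LINT t:{..x}|lborel. f t)"
    and measure_density_lborel_singleton: "measure (density lborel f) {x} = 0"
proof -
  note emeasure_eq = emeasure_density_lborel_eq_set_integral[OF f_meas f_nonneg f_int]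
  have "prob_space (density lborel f)"
    by (rule prob_spaceI) (simp add: emeasure_eq f_total set_lebesgue_integral_def)
  then show "real_distribution (density lborel f)"
    by (simp add: real_distribution_def real_distribution_axioms_def)
  have "0 \<le> (LINT t:{..x}|lborel. f t)"
    using f_nonneg by (simp add: set_lebesgue_integral_def)
  then show "cdf (density lborel f) x = (LINT t:{..x}|lborel. f t)"
    by (simp add: cdf_def measure_def emeasure_eq)
  have "AE y in lborel. y \<in> {x} \<longrightarrow> ennreal (f y) = 0"
    using AE_lborel_singleton[of x] by eventually_elim auto
  then have "{x} \<in> null_sets (density lborel f)"
    using f_meas by (simp add: null_sets_density_iff)
  then show "measure (density lborel f) {x} = 0"
    by (simp add: measure_def null_setsD1)
qed

context real_distribution
begin

lemma continuous_on_cdf_atomless: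
  assumes "\<And>x. measure M {x} = 0"
  shows "continuous_on UNIV (cdf M)"
  using assms by (simp add: continuous_on_eq_continuous_at isCont_cdf)

lemma AE_cdf_pos:
  assumes atomless: "\<And>x. measure M {x} = 0"
  shows "AE x in M. 0 < cdf M x"
proof (cases "{x. cdf M x \<le> 0} = {}")
  case True
  then show ?thesis by (auto simp: not_le)
next
  case False
  define S where "S = {x. cdf M x \<le> 0}"
  have "\<forall>\<^sub>F x in at_top. 1/2 < cdf M x"
    using cdf_lim_at_top_prob by (rule order_tendstoD) simp
  then obtain b where b: "\<And>x. b \<le> x \<Longrightarrow> 1/2 < cdf M x"
    by (auto simp: eventually_at_top_linorder)
  have "x \<le> b" if "x \<in> S" for x
    using b[of x] that by (cases "b \<le> x") (auto simp: S_def)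
  then have bdd: "bdd_above S"
    by (rule bdd_aboveI)
  have "closed S"
    unfolding S_def using continuous_on_cdf_atomless[OF atomless]
    by (intro closed_Collect_le continuous_on_const) auto
  then have "Sup S \<in> S"
    using False bdd by (intro closed_contains_Sup) (auto simp: S_def)
  then have "cdf M (Sup S) = 0"
    using cdf_nonneg[of "Sup S"] by (simp add: S_def)
  then have "emeasure M {..Sup S} = 0"
    by (simp add: cdf_def emeasure_eq_measure)
  then have "AE x in M. x \<notin> {..Sup S}"
    by (intro AE_not_in) auto
  then show ?thesis
    by eventually_elim (use cSup_upper[OF _ bdd] in \<open>force simp: S_def\<close>)
qed

lemma AE_cdf_less_1:
  assumes atomless: "\<And>x. measure M {x} = 0"
  shows "AE x in M. cdf M x < 1"
proof (cases "{x. 1 \<le> cdf M x} = {}")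
  case True
  then show ?thesis by (auto simp: not_le)
next
  case False
  define S where "S = {x. 1 \<le> cdf M x}"
  have "\<forall>\<^sub>F x in at_bot. cdf M x < 1/2"
    using cdf_lim_at_bot by (rule order_tendstoD) simp
  then obtain b where b: "\<And>x. x \<le> b \<Longrightarrow> cdf M x < 1/2"
    by (auto simp: eventually_at_bot_linorder)
  have "b \<le> x" if "x \<in> S" for x
    using b[of x] that by (cases "x \<le> b") (auto simp: S_def)
  then have bdd: "bdd_below S"
    by (rule bdd_belowI)
  have "closed S"
    unfolding S_def using continuous_on_cdf_atomless[OF atomless]
    by (intro closed_Collect_le continuous_on_const) auto
  then have "Inf S \<in> S"
    using False bdd by (intro closed_contains_Inf) (auto simp: S_def)
  then have "cdf M (Inf S) = 1"
    using cdf_bounded_prob[of "Inf S"] by (simp add: S_def)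
  then have "measure M {Inf S<..} = 0"
    using prob_compl[of "{..Inf S}"]
    by (simp add: cdf_def Compl_eq_Diff_UNIV[symmetric] Compl_atMost)
  then have "AE x in M. x \<notin> {Inf S<..}"
    by (intro AE_not_in) (auto simp: emeasure_eq_measure)
  moreover have "AE x in M. x \<notin> {Inf S}"
    using atomless by (intro AE_not_in) (auto simp: emeasure_eq_measure)
  ultimately show ?thesis
  proof eventually_elim
    case (elim x)
    then have "x \<notin> S"
      using cInf_lower[OF _ bdd, of x] by auto
    then show ?case
      by (simp add: S_def)
  qed
qed

lemma cdf_quantile_cdf:
  assumes atomless: "\<And>x. measure M {x} = 0" and pos: "0 < cdf M x"
  shows "cdf M (quantile (cdf M) (cdf M x)) = cdf M x"
proof -
  define S where "S = {y. cdf M x \<le> cdf M y}"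
  have "\<forall>\<^sub>F y in at_bot. cdf M y < cdf M x"
    using cdf_lim_at_bot pos by (rule order_tendstoD)
  then obtain b where b: "\<And>y. y \<le> b \<Longrightarrow> cdf M y < cdf M x"
    by (auto simp: eventually_at_bot_linorder)
  have "b \<le> y" if "y \<in> S" for y
    using b[of y] that by (cases "y \<le> b") (auto simp: S_def)
  then have bdd: "bdd_below S"
    by (rule bdd_belowI)
  have "closed S"
    unfolding S_def using continuous_on_cdf_atomless[OF atomless]
    by (intro closed_Collect_le continuous_on_const) auto
  then have "Inf S \<in> S"
    using bdd by (intro closed_contains_Inf) (auto simp: S_def)
  moreover have "Inf S \<le> x"
    using bdd by (intro cInf_lower) (auto simp: S_def)
  ultimately show ?thesis
    using cdf_nondecreasing[of "Inf S" x] by (simp add: S_def quantile_def)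
qed

end

lemma AE_density_lborel_cdf_strictly_between:
  fixes f :: "real \<Rightarrow> real"
  assumes f_meas: "f \<in> borel_measurable lborel" and "\<And>x. 0 \<le> f x"
    and "integrable lborel f" and "(LINT x|lborel. f x) = 1"
  shows "AE x in lborel. 0 < f x \<longrightarrow>
    0 < cdf (density lborel f) x \<and> cdf (density lborel f) x < 1"
proof -
  interpret real_distribution "density lborel f"
    using assms by (rule real_distribution_density_lborel)
  have atomless: "\<And>x. measure (density lborel f) {x} = 0"
    using assms by (rule measure_density_lborel_singleton)
  have "AE x in density lborel f. 0 < cdf (density lborel f) x \<and> cdf (density lborel f) x < 1"
    using AE_cdf_pos[OF atomless] AE_cdf_less_1[OF atomless] by eventually_elim simp
  then show ?thesis
    using f_meas by (subst (asm) AE_density) auto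
qed

lemma quantile_distortion:
  fixes q F :: "real \<Rightarrow> real"
  assumes q: "strict_mono_on {0..1} q" and F: "\<And>x. F x \<in> {0..1}" and u: "u \<in> {0..1}"
  shows "quantile (\<lambda>x. q (F x)) (q u) = quantile F u"
proof -
  have "q u \<le> q (F x) \<longleftrightarrow> u \<le> F x" for x
    using strict_mono_on_less_eq[OF q u F] .
  then show ?thesis
    by (simp add: quantile_def)
qed

text \<open>No sign conditions are needed: real powr only sees absolute values, as ln (- x) = ln x.\<close>

lemma powr_mult_ratio_cancel:
  fixes a b c d \<alpha> :: real
  assumes "(b * c) powr \<alpha> \<noteq> 0"
  shows "(a * d) powr \<alpha> = (a * c) powr \<alpha> / (b * c) powr \<alpha> * (b * d) powr \<alpha>"
  using assms by (simp add: powr_mult)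

lemma distorted_density_powr_eq_ratio:
  fixes F f q1 q2 dq1 dq2 :: "real \<Rightarrow> real" and \<alpha> :: real
  defines "fT1 \<equiv> \<lambda>x. dq1 (F x) * f x" and "fT2 \<equiv> \<lambda>x. dq2 (F x) * f x"
  defines "ratio \<equiv> \<lambda>u. fT2 (quantile (\<lambda>x. q2 (F x)) (q2 u)) powr \<alpha> /
                        fT1 (quantile (\<lambda>x. q1 (F x)) (q1 u)) powr \<alpha>"
  assumes q1: "strict_mono_on {0..1} q1" and q2: "strict_mono_on {0..1} q2"
    and F: "\<And>y. F y \<in> {0..1}" and F_quantile: "F (quantile F (F x)) = F x"
    and nonzero: "ratio (F x) \<noteq> 0"
  shows "fT2 x powr \<alpha> = ratio (F x) * fT1 x powr \<alpha>"
proof -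
  define m where "m = quantile F (F x)"
  have ratio_eq: "ratio (F x) = (dq2 (F x) * f m) powr \<alpha> / (dq1 (F x) * f m) powr \<alpha>"
    using F_quantile F[of x]
    by (simp add: ratio_def fT1_def fT2_def m_def
        quantile_distortion[OF q1 F] quantile_distortion[OF q2 F])
  then have "(dq1 (F x) * f m) powr \<alpha> \<noteq> 0"
    using nonzero by auto
  then show ?thesis
    unfolding fT1_def fT2_def ratio_eq by (rule powr_mult_ratio_cancel)
qed

lemma AE_distorted_density_powr_bounds:
  fixes f F q1 q2 dq1 dq2 :: "real \<Rightarrow> real" and \<alpha> L U :: real
  defines "fT1 \<equiv> \<lambda>x. dq1 (F x) * f x" and "fT2 \<equiv> \<lambda>x. dq2 (F x) * f x"
  defines "ratio \<equiv> \<lambda>u. fT2 (quantile (\<lambda>x. q2 (F x)) (q2 u)) powr \<alpha> /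
                        fT1 (quantile (\<lambda>x. q1 (F x)) (q1 u)) powr \<alpha>"
  assumes f_meas: "f \<in> borel_measurable lborel" and f_nonneg: "\<And>x. 0 \<le> f x"
    and f_int: "integrable lborel f" and f_total: "(LINT x|lborel. f x) = 1"
    and F_def: "\<And>x. F x = (LINT t:{..x}|lborel. f t)"
    and q1: "strict_mono_on {0..1} q1" and q2: "strict_mono_on {0..1} q2"
    and L: "0 < L"
    and ratio_bounds: "\<And>u. u \<in> {0<..<1} \<Longrightarrow> L \<le> ratio u \<and> ratio u \<le> U"
  shows "AE x in lborel.
    L * fT1 x powr \<alpha> \<le> fT2 x powr \<alpha> \<and> fT2 x powr \<alpha> \<le> U * fT1 x powr \<alpha>"
proof -
  define M where "M = density lborel f"
  interpret real_distribution M
    unfolding M_def using f_meas f_nonneg f_int f_total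
    by (rule real_distribution_density_lborel)
  have atomless: "\<And>x. measure M {x} = 0"
    unfolding M_def using f_meas f_nonneg f_int f_total
    by (rule measure_density_lborel_singleton)
  have F_cdf: "F = cdf M"
    using cdf_density_lborel[OF f_meas f_nonneg f_int f_total] by (auto simp: M_def F_def)
  have F_range: "\<And>x. F x \<in> {0..1}"
    by (simp add: F_cdf cdf_nonneg cdf_bounded_prob)
  have pointwise: "fT2 x powr \<alpha> = ratio (F x) * fT1 x powr \<alpha>" if "0 < F x" "F x < 1" for x
  proof -
    have "F (quantile F (F x)) = F x"
      unfolding F_cdf using atomless that(1)[unfolded F_cdf] by (rule cdf_quantile_cdf)
    moreover have "ratio (F x) \<noteq> 0"
      using ratio_bounds[of "F x"] that L by auto
    ultimately show ?thesis
      using q1 q2 F_range unfolding ratio_def fT1_def fT2_def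
      by (intro distorted_density_powr_eq_ratio) auto
  qed
  show ?thesis
    using AE_density_lborel_cdf_strictly_between[OF f_meas f_nonneg f_int f_total]
  proof eventually_elim
    case (elim x)
    show ?case
    proof (cases "f x = 0")
      case False
      then have "0 < F x" "F x < 1"
        using elim f_nonneg[of x] by (auto simp: F_cdf M_def)
      then show ?thesis
        using pointwise ratio_bounds by (simp add: mult_right_mono)
    qed (simp add: fT1_def fT2_def)
  qed
qed

lemma set_integral_scaled_bounds:
  fixes g h :: "'a \<Rightarrow> real"
  assumes g: "set_integrable M A g" and h: "set_integrable M A h"
    and bounds: "AE x in M. L * g x \<le> h x \<and> h x \<le> U * g x"
  shows "L * (LINT x:A|M. g x) \<le> (LINT x:A|M. h x)"
    and "(LINT x:A|M. h x) \<le> U * (LINT x:A|M. g x)"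
proof -
  have "(LINT x:A|M. L * g x) \<le> (LINT x:A|M. h x)"
    using bounds
    by (intro set_integral_mono_AE set_integrable_mult_right g h) (auto elim: eventually_mono)
  then show "L * (LINT x:A|M. g x) \<le> (LINT x:A|M. h x)"
    by simp
  have "(LINT x:A|M. h x) \<le> (LINT x:A|M. U * g x)"
    using bounds
    by (intro set_integral_mono_AE set_integrable_mult_right g h) (auto elim: eventually_mono)
  then show "(LINT x:A|M. h x) \<le> U * (LINT x:A|M. g x)"
    by simp
qed

lemma powr_scaled_bounds:
  fixes I J L U t :: real
  assumes L: "0 < L" and I: "0 \<le> I" and lower: "L * I \<le> J" and upper: "J \<le> U * I"
  shows "0 \<le> t \<Longrightarrow> L powr t * I powr t \<le> J powr t \<and> J powr t \<le> U powr t * I powr t"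
    and "t \<le> 0 \<Longrightarrow> U powr t * I powr t \<le> J powr t \<and> J powr t \<le> L powr t * I powr t"
proof -
  consider "I = 0" "J = 0" | "0 < L * I"
    using I L lower upper by (cases "I = 0") auto
  note cases = this
  show "0 \<le> t \<Longrightarrow> L powr t * I powr t \<le> J powr t \<and> J powr t \<le> U powr t * I powr t"
    using cases
    by cases (use lower upper in \<open>auto simp: powr_mult[symmetric] intro: powr_mono2\<close>)
  show "t \<le> 0 \<Longrightarrow> U powr t * I powr t \<le> J powr t \<and> J powr t \<le> L powr t * I powr t"
    using cases
    by cases (use lower upper in \<open>auto simp: powr_mult[symmetric] intro: powr_mono2'\<close>)
qed

lemma renyi_igf_scaled_bounds:
  fixes g h :: "real \<Rightarrow> real" and L U \<alpha> \<beta> :: real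
  assumes L: "0 < L"
    and lower: "L * (LINT x:{0..}|lborel. g x powr \<alpha>) \<le> (LINT x:{0..}|lborel. h x powr \<alpha>)"
    and upper: "(LINT x:{0..}|lborel. h x powr \<alpha>) \<le> U * (LINT x:{0..}|lborel. g x powr \<alpha>)"
  shows "(\<alpha> > 1 \<and> \<beta> \<le> 1) \<or> (\<alpha> < 1 \<and> \<beta> \<ge> 1) \<Longrightarrow>
      L powr (\<beta> - 1) * renyi_igf \<alpha> \<beta> g \<le> renyi_igf \<alpha> \<beta> h \<and>
      renyi_igf \<alpha> \<beta> h \<le> U powr (\<beta> - 1) * renyi_igf \<alpha> \<beta> g"
    and "(\<alpha> > 1 \<and> \<beta> \<ge> 1) \<or> (\<alpha> < 1 \<and> \<beta> \<le> 1) \<Longrightarrow>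
      L powr (\<beta> - 1) * renyi_igf \<alpha> \<beta> g \<ge> renyi_igf \<alpha> \<beta> h \<and>
      renyi_igf \<alpha> \<beta> h \<ge> U powr (\<beta> - 1) * renyi_igf \<alpha> \<beta> g"
proof -
  define c where "c = 1 / (1 - \<alpha>)"
  define t where "t = \<beta> - 1"
  define I where "I = (LINT x:{0..}|lborel. g x powr \<alpha>)"
  define J where "J = (LINT x:{0..}|lborel. h x powr \<alpha>)"
  have "0 \<le> I"
    unfolding I_def set_lebesgue_integral_def by (simp add: indicator_def)
  note powr_bounds =
    powr_scaled_bounds[OF L this lower[folded I_def J_def] upper[folded I_def J_def]]
  have renyi: "renyi_igf \<alpha> \<beta> g = c * I powr t" "renyi_igf \<alpha> \<beta> h = c * J powr t"
    by (simp_all add: renyi_igf_def c_def t_def I_def J_def)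
  have c_sign: "\<alpha> > 1 \<Longrightarrow> c < 0" "\<alpha> < 1 \<Longrightarrow> 0 < c"
    by (simp_all add: c_def)
  show "(\<alpha> > 1 \<and> \<beta> \<le> 1) \<or> (\<alpha> < 1 \<and> \<beta> \<ge> 1) \<Longrightarrow>
      L powr (\<beta> - 1) * renyi_igf \<alpha> \<beta> g \<le> renyi_igf \<alpha> \<beta> h \<and>
      renyi_igf \<alpha> \<beta> h \<le> U powr (\<beta> - 1) * renyi_igf \<alpha> \<beta> g"
    using powr_bounds c_sign unfolding renyi t_def[symmetric]
    by (auto simp: t_def mult.left_commute intro: mult_left_mono mult_left_mono_neg)
  show "(\<alpha> > 1 \<and> \<beta> \<ge> 1) \<or> (\<alpha> < 1 \<and> \<beta> \<le> 1) \<Longrightarrow>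
      L powr (\<beta> - 1) * renyi_igf \<alpha> \<beta> g \<ge> renyi_igf \<alpha> \<beta> h \<and>
      renyi_igf \<alpha> \<beta> h \<ge> U powr (\<beta> - 1) * renyi_igf \<alpha> \<beta> g"
    using powr_bounds c_sign unfolding renyi t_def[symmetric]
    by (auto simp: t_def mult.left_commute intro: mult_left_mono mult_left_mono_neg)
qed

theorem proposition6p4:
  fixes f F :: "real \<Rightarrow> real"
    and q1 q2 dq1 dq2 :: "real \<Rightarrow> real"
    and \<alpha> \<beta> :: real
  defines "FT1 \<equiv> (\<lambda>x. q1 (F x))" and "FT2 \<equiv> (\<lambda>x. q2 (F x))"
    and "fT1 \<equiv> (\<lambda>x. dq1 (F x) * f x)" and "fT2 \<equiv> (\<lambda>x. dq2 (F x) * f x)"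
  defines "\<psi>1 \<equiv> (\<lambda>u. fT1 (quantile FT1 u) powr \<alpha>)"
    and "\<psi>2 \<equiv> (\<lambda>u. fT2 (quantile FT2 u) powr \<alpha>)"
  defines "ratio \<equiv> (\<lambda>u. \<psi>2 (q2 u) / \<psi>1 (q1 u))"
  defines "\<gamma>1 \<equiv> (INF u\<in>{0<..<1}. ratio u) powr (\<beta> - 1)"
    and "\<gamma>2 \<equiv> (SUP u\<in>{0<..<1}. ratio u) powr (\<beta> - 1)"
  assumes f_meas: "f \<in> borel_measurable lborel"
    and f_nonneg: "\<And>x. f x \<ge> 0"
    and f_supp: "\<And>x. x < 0 \<Longrightarrow> f x = 0"
    and f_int: "integrable lborel f"
    and f_total: "(LINT x|lborel. f x) = 1"
    and F_def: "\<And>x. F x = (LINT t:{..x}|lborel. f t)"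
    and q1: "distortion_fn q1 dq1" and q2: "distortion_fn q2 dq2"
    and \<alpha>_pos: "0 < \<alpha>" and \<alpha>_ne1: "\<alpha> \<noteq> 1" and \<beta>_pos: "0 < \<beta>"
    and int1: "set_integrable lborel {0..} (\<lambda>x. fT1 x powr \<alpha>)"
    and int2: "set_integrable lborel {0..} (\<lambda>x. fT2 x powr \<alpha>)"
    and bdd_below: "bdd_below (ratio ` {0<..<1})"
    and bdd_above: "bdd_above (ratio ` {0<..<1})"
    and inf_pos: "(INF u\<in>{0<..<1}. ratio u) > 0"
    and sup_pos: "(SUP u\<in>{0<..<1}. ratio u) > 0"
  shows "(((\<alpha> > 1 \<and> \<beta> \<le> 1) \<or> (\<alpha> < 1 \<and> \<beta> \<ge> 1)) \<longrightarrow>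
           \<gamma>1 * renyi_igf \<alpha> \<beta> fT1 \<le> renyi_igf \<alpha> \<beta> fT2 \<and>
           renyi_igf \<alpha> \<beta> fT2 \<le> \<gamma>2 * renyi_igf \<alpha> \<beta> fT1)
       \<and> (((\<alpha> > 1 \<and> \<beta> \<ge> 1) \<or> (\<alpha> < 1 \<and> \<beta> \<le> 1)) \<longrightarrow>
           \<gamma>1 * renyi_igf \<alpha> \<beta> fT1 \<ge> renyi_igf \<alpha> \<beta> fT2 \<and>
           renyi_igf \<alpha> \<beta> fT2 \<ge> \<gamma>2 * renyi_igf \<alpha> \<beta> fT1)"
proof -
  define L where "L = (INF u\<in>{0<..<1}. ratio u)"
  define U where "U = (SUP u\<in>{0<..<1}. ratio u)"
  have L_pos: "0 < L"
    using inf_pos by (simp add: L_def)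
  have q_mono: "strict_mono_on {0..1} q1" "strict_mono_on {0..1} q2"
    using q1 q2 by (simp_all add: distortion_fn_def)
  have "L \<le> ratio u \<and> ratio u \<le> U" if "u \<in> {0<..<1}" for u
    unfolding L_def U_def using that bdd_below bdd_above by (auto intro: cINF_lower cSUP_upper)
  from AE_distorted_density_powr_bounds[OF f_meas f_nonneg f_int f_total F_def q_mono L_pos
      this[unfolded ratio_def \<psi>1_def \<psi>2_def FT1_def FT2_def fT1_def fT2_def]]
  have "AE x in lborel. L * fT1 x powr \<alpha> \<le> fT2 x powr \<alpha> \<and> fT2 x powr \<alpha> \<le> U * fT1 x powr \<alpha>"
    unfolding fT1_def fT2_def .
  with int1 int2
  have "L * (LINT x:{0..}|lborel. fT1 x powr \<alpha>) \<le> (LINT x:{0..}|lborel. fT2 x powr \<alpha>)"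
    and "(LINT x:{0..}|lborel. fT2 x powr \<alpha>) \<le> U * (LINT x:{0..}|lborel. fT1 x powr \<alpha>)"
    by (rule set_integral_scaled_bounds)+
  from renyi_igf_scaled_bounds[OF L_pos this, of \<beta>] show ?thesis
    unfolding \<gamma>1_def \<gamma>2_def L_def U_def by blast
qed

end
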